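(* Let $\mathcal{T}$ be a finite or countably infinite set, let $\prec$ be a strict total order on $\mathcal{T}$, and let $\mathbf{p}$ and $\mathbf{q}$ be two probability distributions on $\mathcal{T}$. For each positive integer $m$, consider mutually independent random variables $X_0 \sim \mathbf{q}$, $X_1,\dots,X_m \sim^{\mathrm{iid}} \mathbf{p}$, $U_0,U_1,\dots,U_m \sim^{\mathrm{iid}} \mathrm{Uniform}(0,1)$, and define $$R = \sum_{j=1}^m \Big( \mathbb{I}[X_j \prec X_0] + \mathbb{I}[X_j = X_0,\ U_j < U_0] \Big).$$ Then $\mathbf{p} = \mathbf{q}$ if and only if for all $m \ge 1$, the random variable $R$ is distributed as a discrete uniform random variable on $\{0,1,\dots,m\}$.
   Context: $\mathbb{I}[\cdot]$ denotes the indicator of an event. The random variable $R$ depends on $m$ (and on $\prec$, $\mathbf{p}$, $\mathbf{q}$); it is the rank of $X_0$ among $X_1,\dots,X_m$ with ties broken by the uniform variables. *)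

theory Defs
  imports "HOL-Probability.Probability"
begin

text \<open>Sample space for fixed m: coordinate j \<in> {0..m} carries the pair (X_j, U_j).
  X_0 ~ q, X_j ~ p (j \<ge> 1), U_j ~ Uniform(0,1), all mutually independent
  (product measure).\<close>
definition rank_space :: "'a pmf \<Rightarrow> 'a pmf \<Rightarrow> nat \<Rightarrow> (nat \<Rightarrow> 'a \<times> real) measure" where
  "rank_space p q m =
     (\<Pi>\<^sub>M j\<in>{0..m}. (measure_pmf (if j = 0 then q else p)
                          \<Otimes>\<^sub>M uniform_measure lborel {0<..<(1::real)}))"

text \<open>R = sum_{j=1}^m ( I[X_j \<prec> X_0] + I[X_j = X_0 \<and> U_j < U_0] ), where
  (x, y) \<in> r means x \<prec> y.\<close>
definition rank_stat :: "('a \<times> 'a) set \<Rightarrow> nat \<Rightarrow> (nat \<Rightarrow> 'a \<times> real) \<Rightarrow> nat" where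
  "rank_stat r m \<omega> =
     (\<Sum>j\<in>{1..m}. (if (fst (\<omega> j), fst (\<omega> 0)) \<in> r then 1 else 0)
                 + (if fst (\<omega> j) = fst (\<omega> 0) \<and> snd (\<omega> j) < snd (\<omega> 0) then 1 else 0))"

end

theory Submission
  imports Defs "HOL-Analysis.Weierstrass_Theorems" "HOL-Analysis.Gamma_Function" "HOL-Real_Asymp.Real_Asymp"
begin

(* Write Z_j = (X_j, U_j) and order such pairs lexicographically, by the order on the first
   component with ties broken by the second. Then R counts the Z_j, j >= 1, lying below Z_0, so
   given Z_0 = z it is binomial with parameters m and F(z), the p-probability of lying below z.
   Explicitly F(x, u) = P_p(Y < x) + p(x) u, which maps {x} x (0,1) affinely onto an interval I_x
   of length p(x); these intervals are disjoint and fill (0,1) up to a null set. Hence for q = p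
   the value F(Z_0) is uniform on (0,1), and the Beta integral of the Bernstein polynomials gives
   P(R = k) = 1/(m+1).
   Conversely, if R is uniform, the ranks k with k/m in I_x shrunk by d at both ends have total
   probability about p(x) - 2d. By Chebyshev's inequality for the binomial distribution, such
   ranks occur with probability O(1/(m d^2)) unless X_0 = x, an event of probability q(x).
   Letting m tend to infinity and then d to 0 gives p(x) <= q(x) for every x, hence p = q. *)

section \<open>Bernstein polynomials and binomial counts\<close>

lemma measurable_Bernstein [measurable]: "Bernstein m k \<in> borel_measurable borel"
  unfolding Bernstein_def by measurable

lemma has_integral_Bernstein:
  assumes km: "k \<le> m"
  shows "(Bernstein m k has_integral 1 / (real m + 1)) {0<..<1}"
proof -
  have "((\<lambda>t. t powr (real (k+1) - 1) * (1 - t) powr (real (m-k+1) - 1))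
      has_integral Beta (real (k+1)) (real (m-k+1))) {0<..<1}"
    using has_integral_Beta_real[of "real (k+1)" "real (m-k+1)"]
    by (simp add: has_integral_Icc_iff_Ioo)
  then have "((\<lambda>t. t ^ k * (1 - t) ^ (m - k)) has_integral Beta (real (k+1)) (real (m-k+1))) {0<..<1}"
    by (rule has_integral_eq[rotated]) (auto simp: powr_realpow)
  then have "(Bernstein m k has_integral real (m choose k) * Beta (real (k+1)) (real (m-k+1))) {0<..<1}"
    unfolding Bernstein_def mult.assoc by (rule has_integral_mult_right)
  moreover have "real (m choose k) * Beta (real (k+1)) (real (m-k+1)) = 1 / (real m + 1)"
  proof -
    have "Gamma (real (k+1)) = fact k" "Gamma (real (m-k+1)) = fact (m-k)"
      using Gamma_fact[of k] Gamma_fact[of "m-k"] by (simp_all add: add.commute)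
    moreover have "Gamma (real (k+1) + real (m-k+1)) = (real m + 1) * fact m"
      using Gamma_fact[of "m+1"] km by (simp add: add.commute)
    moreover have "fact k * fact (m - k) * real (m choose k) = fact m"
      using binomial_fact_lemma[OF km] by (metis of_nat_fact of_nat_mult)
    moreover have "(real m + 1) * fact m \<noteq> 0"
      by simp
    ultimately show ?thesis
      unfolding Beta_def by (simp add: field_simps)
  qed
  ultimately show ?thesis by simp
qed

lemma sum_Bernstein_variance:
  "(\<Sum>k\<le>m. (real k - real m * w)\<^sup>2 * Bernstein m k w) = real m * w * (1 - w)"
proof -
  have "(\<Sum>k\<le>m. (real k - real m * w)\<^sup>2 * Bernstein m k w) =
    (\<Sum>k\<le>m. real k * (real k - 1) * Bernstein m k w
       + (1 - 2 * real m * w) * (real k * Bernstein m k w) + (real m * w)\<^sup>2 * Bernstein m k w)"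
    by (intro sum.cong) (simp_all add: power2_eq_square algebra_simps)
  also have "\<dots> = real m * (real m - 1) * w\<^sup>2 + (1 - 2 * real m * w) * (real m * w) + (real m * w)\<^sup>2"
    by (simp only: sum.distrib flip: sum_distrib_left) simp
  also have "\<dots> = real m * w * (1 - w)"
    by (simp add: power2_eq_square algebra_simps)
  finally show ?thesis .
qed

lemma sum_Bernstein_le_1:
  assumes "0 \<le> w" "w \<le> 1" "K \<subseteq> {..m}"
  shows "(\<Sum>k\<in>K. Bernstein m k w) \<le> 1"
proof -
  have "(\<Sum>k\<in>K. Bernstein m k w) \<le> (\<Sum>k\<le>m. Bernstein m k w)"
    using assms by (intro sum_mono2) (auto intro: Bernstein_nonneg)
  then show ?thesis by simp
qed

definition rank_window :: "nat \<Rightarrow> real \<Rightarrow> real \<Rightarrow> nat set" where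
  "rank_window m a b = {k. k \<le> m \<and> real m * a < real k \<and> real k < real m * b}"

lemma card_rank_window_ge:
  assumes a: "0 \<le> a" and b: "b \<le> 1"
  shows "real m * (b - a) - 1 \<le> real (card (rank_window m a b))"
proof -
  define lo where "lo = nat \<lfloor>real m * a\<rfloor> + 1"
  define hi where "hi = nat \<lceil>real m * b\<rceil>"
  have "0 \<le> real m * a" using a by simp
  then have lo: "real m * a < real lo" "real lo \<le> real m * a + 1"
    unfolding lo_def by linarith+
  have hi: "real m * b \<le> real hi"
    unfolding hi_def by linarith
  have "real m * b \<le> real m"
    using b by (simp add: mult_left_le)
  then have "{lo..<hi} \<subseteq> rank_window m a b"
    using lo unfolding rank_window_def hi_def by (auto simp: less_ceiling_iff) linarith+
  then have "card {lo..<hi} \<le> card (rank_window m a b)"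
    by (rule card_mono[rotated]) (simp add: rank_window_def)
  then show ?thesis
    using lo hi by (simp add: algebra_simps)
qed

text \<open>Chebyshev's inequality for the binomial distribution.\<close>
lemma sum_Bernstein_rank_window_le:
  assumes m: "m > 0" and d: "d > 0" and w: "0 \<le> w" "w \<le> 1"
    and far: "w \<le> a - d \<or> b + d \<le> w"
  shows "(\<Sum>k\<in>rank_window m a b. Bernstein m k w) \<le> 1 / (4 * real m * d\<^sup>2)"
proof -
  let ?K = "rank_window m a b"
  have md: "real m * d > 0" using m d by simp
  have "Bernstein m k w \<le> (real k - real m * w)\<^sup>2 / (real m * d)\<^sup>2 * Bernstein m k w"
    if "k \<in> ?K" for k
  proof -
    have "real m * w \<le> real m * (a - d) \<or> real m * (b + d) \<le> real m * w"
      using far by (auto intro: mult_left_mono)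
    then have "real m * d \<le> \<bar>real k - real m * w\<bar>"
      using that unfolding rank_window_def by (auto simp: algebra_simps abs_if)
    then have "(real m * d)\<^sup>2 \<le> (real k - real m * w)\<^sup>2"
      using md by (metis abs_le_square_iff abs_of_pos)
    then have "1 \<le> (real k - real m * w)\<^sup>2 / (real m * d)\<^sup>2"
      using m d by (simp add: le_divide_eq)
    then show ?thesis
      using Bernstein_nonneg[OF w] by (metis mult_le_cancel_right1 not_le)
  qed
  then have "(\<Sum>k\<in>?K. Bernstein m k w) \<le> (\<Sum>k\<in>?K. (real k - real m * w)\<^sup>2 / (real m * d)\<^sup>2 * Bernstein m k w)"
    by (rule sum_mono)
  also have "\<dots> \<le> (\<Sum>k\<le>m. (real k - real m * w)\<^sup>2 / (real m * d)\<^sup>2 * Bernstein m k w)"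
    using Bernstein_nonneg[OF w] by (intro sum_mono2) (auto simp: rank_window_def)
  also have "\<dots> = real m * w * (1 - w) / (real m * d)\<^sup>2"
    by (simp add: sum_Bernstein_variance flip: sum_divide_distrib)
  also have "\<dots> \<le> real m * (1/4) / (real m * d)\<^sup>2"
  proof -
    have "w * (1 - w) \<le> 1/4"
      using zero_le_power2[of "w - 1/2"] by (simp add: power2_eq_square algebra_simps)
    from mult_left_mono[OF this, of "real m"] show ?thesis
      by (intro divide_right_mono) (simp_all add: mult.assoc)
  qed
  also have "\<dots> = 1 / (4 * real m * d\<^sup>2)"
    using m d by (simp add: power2_eq_square field_simps)
  finally show ?thesis .
qed

lemma emeasure_PiM_card_eq_Bernstein:
  assumes N: "prob_space N" and A: "A \<in> sets N" and J: "finite J"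
  shows "emeasure (PiM J (\<lambda>_. N)) {X \<in> space (PiM J (\<lambda>_. N)). card {j\<in>J. X j \<in> A} = k} =
    ennreal (Bernstein (card J) k (measure N A))"
proof -
  interpret N: prob_space N by fact
  interpret P: product_sigma_finite "\<lambda>_. N"
    unfolding product_sigma_finite_def by (auto intro: N.sigma_finite_measure)
  let ?SS = "{S. S \<subseteq> J \<and> card S = k}"
  let ?B = "\<lambda>S. PiE J (\<lambda>j. if j \<in> S then A else space N - A)"
  let ?a = "measure N A"
  have hits: "{j\<in>J. X j \<in> A} = S" if "X \<in> ?B S" "S \<subseteq> J" for X S
    using that by (auto simp: PiE_iff split: if_splits)
  have "{X \<in> space (PiM J (\<lambda>_. N)). card {j\<in>J. X j \<in> A} = k} = (\<Union>S\<in>?SS. ?B S)"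
  proof (intro equalityI subsetI)
    fix X assume "X \<in> {X \<in> space (PiM J (\<lambda>_. N)). card {j\<in>J. X j \<in> A} = k}"
    then have "X \<in> ?B {j\<in>J. X j \<in> A}" "{j\<in>J. X j \<in> A} \<in> ?SS"
      by (auto simp: space_PiM PiE_iff)
    then show "X \<in> (\<Union>S\<in>?SS. ?B S)" by blast
  next
    fix X assume "X \<in> (\<Union>S\<in>?SS. ?B S)"
    then obtain S where "S \<in> ?SS" "X \<in> ?B S" by auto
    moreover have "X \<in> space (PiM J (\<lambda>_. N))"
      using \<open>X \<in> ?B S\<close> sets.sets_into_space[OF A] by (auto simp: space_PiM PiE_iff split: if_splits)
    ultimately show "X \<in> {X \<in> space (PiM J (\<lambda>_. N)). card {j\<in>J. X j \<in> A} = k}"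
      using hits by auto
  qed
  moreover have "disjoint_family_on ?B ?SS"
    unfolding disjoint_family_on_def
  proof (intro ballI impI)
    fix S T assume "S \<in> ?SS" "T \<in> ?SS" "S \<noteq> T"
    then have "X \<notin> ?B S \<inter> ?B T" for X
      using hits[of X S] hits[of X T] by auto
    then show "?B S \<inter> ?B T = {}" by blast
  qed
  moreover have "?B ` ?SS \<subseteq> sets (PiM J (\<lambda>_. N))"
    using A J by (auto intro!: sets_PiM_I_finite)
  moreover have "finite ?SS"
    using J by (auto intro: finite_subset[of _ "Pow J"])
  moreover have "emeasure (PiM J (\<lambda>_. N)) (?B S) = ennreal (?a ^ k * (1 - ?a) ^ (card J - k))"
    if S: "S \<in> ?SS" for S
  proof -
    have "emeasure (PiM J (\<lambda>_. N)) (?B S) = (\<Prod>j\<in>J. emeasure N (if j \<in> S then A else space N - A))"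
      using A J by (intro P.emeasure_PiM) auto
    also have "\<dots> = (\<Prod>j\<in>J. ennreal (if j \<in> S then ?a else 1 - ?a))"
      using A by (intro prod.cong refl) (auto simp: N.emeasure_eq_measure N.prob_compl)
    also have "\<dots> = ennreal (\<Prod>j\<in>J. (if j \<in> S then ?a else 1 - ?a))"
      by (intro prod_ennreal) (auto simp: N.prob_le_1)
    also have "(\<Prod>j\<in>J. (if j \<in> S then ?a else 1 - ?a)) =
        ?a ^ card (J \<inter> {j. j \<in> S}) * (1 - ?a) ^ card (J \<inter> - {j. j \<in> S})"
      using J by (simp add: prod.If_cases)
    also have "J \<inter> {j. j \<in> S} = S"
      using S by auto
    also have "J \<inter> - {j. j \<in> S} = J - S"
      by auto
    also have "card (J - S) = card J - k"
      using S J by (auto simp: card_Diff_subset finite_subset)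
    finally show ?thesis
      using S by simp
  qed
  ultimately have "emeasure (PiM J (\<lambda>_. N)) {X \<in> space (PiM J (\<lambda>_. N)). card {j\<in>J. X j \<in> A} = k} =
      (\<Sum>S\<in>?SS. ennreal (?a ^ k * (1 - ?a) ^ (card J - k)))"
    by (simp only: sum_emeasure[symmetric]) (rule sum.cong, simp_all)
  also have "\<dots> = ennreal (real (card J choose k) * (?a ^ k * (1 - ?a) ^ (card J - k)))"
    using n_subsets[OF J] by (simp add: ennreal_of_nat_eq_real_of_nat ennreal_mult' N.prob_le_1)
  finally show ?thesis by (simp add: Bernstein_def mult.assoc)
qed

section \<open>The rank statistic as a binomial mixture\<close>

definition lex_less :: "('a \<times> 'a) set \<Rightarrow> 'a \<times> real \<Rightarrow> 'a \<times> real \<Rightarrow> bool" where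
  "lex_less r z w \<longleftrightarrow> (fst z, fst w) \<in> r \<or> (fst z = fst w \<and> snd z < snd w)"

lemma rank_stat_eq_card:
  assumes "irrefl r"
  shows "rank_stat r m \<omega> = card {j\<in>{1..m}. lex_less r (\<omega> j) (\<omega> 0)}"
proof -
  have "rank_stat r m \<omega> = (\<Sum>j\<in>{1..m}. if lex_less r (\<omega> j) (\<omega> 0) then 1 else 0)"
    unfolding rank_stat_def lex_less_def
    by (intro sum.cong refl) (use assms in \<open>auto simp: irrefl_def\<close>)
  then show ?thesis
    by (simp add: sum.If_cases Int_def conj_assoc)
qed

lemma pred_lex_less:
  fixes r :: "('a::countable \<times> 'a) set"
  assumes f: "f \<in> M \<rightarrow>\<^sub>M count_space UNIV \<Otimes>\<^sub>M borel"
    and g: "g \<in> M \<rightarrow>\<^sub>M count_space UNIV \<Otimes>\<^sub>M borel"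
  shows "Measurable.pred M (\<lambda>x. lex_less r (f x) (g x))"
proof -
  have "(\<lambda>x. (fst (f x), fst (g x))) \<in> M \<rightarrow>\<^sub>M count_space UNIV \<Otimes>\<^sub>M count_space UNIV"
    using f g by measurable
  then have fsts: "(\<lambda>x. (fst (f x), fst (g x))) \<in> M \<rightarrow>\<^sub>M count_space UNIV"
    by (simp add: pair_measure_countable)
  have "Measurable.pred M (\<lambda>x. (fst (f x), fst (g x)) \<in> r)"
    by (rule pred_sets2[OF _ fsts]) simp
  moreover have "Measurable.pred M (\<lambda>x. (fst (f x), fst (g x)) \<in> Id)"
    by (rule pred_sets2[OF _ fsts]) simp
  then have "Measurable.pred M (\<lambda>x. fst (f x) = fst (g x))"
    by simp
  moreover have "(\<lambda>x. snd (f x)) \<in> borel_measurable M" "(\<lambda>x. snd (g x)) \<in> borel_measurable M"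
    using f g by measurable
  ultimately show ?thesis
    unfolding lex_less_def by measurable
qed

abbreviation uniform01 :: "real measure" where
  "uniform01 \<equiv> uniform_measure lborel {0<..<1}"

definition pmf_unif :: "'a pmf \<Rightarrow> ('a \<times> real) measure" where
  "pmf_unif p = measure_pmf p \<Otimes>\<^sub>M uniform01"

lemma prob_space_uniform01: "prob_space uniform01"
  by (rule prob_space_uniform_measure) auto

lemma prob_space_pmf_unif: "prob_space (pmf_unif p)"
  unfolding pmf_unif_def using prob_space_uniform01
  by (intro prob_space_pair) (auto simp: measure_pmf.prob_space_axioms)

lemma sets_pmf_unif: "sets (pmf_unif p) = sets (count_space UNIV \<Otimes>\<^sub>M borel)"
  unfolding pmf_unif_def by (intro sets_pair_measure_cong) auto

lemma space_pmf_unif [simp]: "space (pmf_unif p) = UNIV"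
  unfolding pmf_unif_def by (simp add: space_pair_measure)

lemma measure_pmf_unif_Times:
  assumes "B \<in> sets borel"
  shows "measure (pmf_unif p) (A \<times> B) = measure_pmf.prob p A * measure uniform01 B"
proof -
  interpret U: prob_space uniform01 by (rule prob_space_uniform01)
  have "emeasure (pmf_unif p) (A \<times> B) = emeasure (measure_pmf p) A * emeasure uniform01 B"
    unfolding pmf_unif_def using assms by (intro U.emeasure_pair_measure_Times) auto
  then show ?thesis
    by (simp add: measure_def enn2real_mult)
qed

lemma measure_uniform01_lessThan: "measure uniform01 {..<u} = max 0 (min 1 u)"
proof -
  have "measure uniform01 {..<u} = measure lborel ({0<..<1} \<inter> {..<u})"
    by (subst measure_uniform_measure) auto
  also have "{0<..<1} \<inter> {..<u} = {0<..<min 1 u}"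
    by auto
  finally show ?thesis by (cases "0 \<le> u") auto
qed

lemma rank_space_eq_PiM: "rank_space p q m = PiM {0..m} (\<lambda>j. pmf_unif (if j = 0 then q else p))"
  unfolding rank_space_def pmf_unif_def by (intro PiM_cong) auto

lemma measurable_card_lex_less:
  fixes r :: "('a::countable \<times> 'a) set" and m :: nat
  assumes coord: "\<And>j. j \<in> {0..m} \<Longrightarrow> (\<lambda>\<omega>. \<omega> j) \<in> M \<rightarrow>\<^sub>M count_space UNIV \<Otimes>\<^sub>M borel"
  shows "(\<lambda>\<omega>. card {j\<in>{1..m}. lex_less r (\<omega> j) (\<omega> 0)}) \<in> M \<rightarrow>\<^sub>M count_space UNIV"
proof (rule measurable_card)
  fix i show "{\<omega> \<in> space M. i \<in> {j\<in>{1..m}. lex_less r (\<omega> j) (\<omega> 0)}} \<in> sets M"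
  proof (cases "i \<in> {1..m}")
    case True
    have "Measurable.pred M (\<lambda>\<omega>. lex_less r (\<omega> i) (\<omega> 0))"
      by (rule pred_lex_less; rule coord) (use True in auto)
    with True show ?thesis by (simp add: pred_def)
  next
    case False
    then have "{\<omega> \<in> space M. i \<in> {j\<in>{1..m}. lex_less r (\<omega> j) (\<omega> 0)}} = {}"
      by blast
    then show ?thesis
      by (metis sets.empty_sets)
  qed
qed

lemma measurable_rank_stat:
  fixes r :: "('a::countable \<times> 'a) set"
  assumes "irrefl r"
  shows "rank_stat r m \<in> rank_space p q m \<rightarrow>\<^sub>M count_space UNIV"
proof -
  have sets: "sets (rank_space p q m) = sets (PiM {0..m} (\<lambda>_. count_space UNIV \<Otimes>\<^sub>M (borel :: real measure)))"
    unfolding rank_space_eq_PiM by (intro sets_PiM_cong refl) (simp add: sets_pmf_unif)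
  have "(\<lambda>\<omega>. \<omega> j) \<in> rank_space p q m \<rightarrow>\<^sub>M count_space UNIV \<Otimes>\<^sub>M borel" if "j \<in> {0..m}" for j
    unfolding measurable_cong_sets[OF sets refl] using that by measurable
  then have "(\<lambda>\<omega>. card {j\<in>{1..m}. lex_less r (\<omega> j) (\<omega> 0)}) \<in> rank_space p q m \<rightarrow>\<^sub>M count_space UNIV"
    by (rule measurable_card_lex_less)
  moreover have "rank_stat r m = (\<lambda>\<omega>. card {j\<in>{1..m}. lex_less r (\<omega> j) (\<omega> 0)})"
    using rank_stat_eq_card[OF assms] by blast
  ultimately show ?thesis
    by (simp only:)
qed

lemma
  shows rank_space_split:
    "rank_space p q m = distr (pmf_unif q \<Otimes>\<^sub>M PiM {1..m} (\<lambda>_. pmf_unif p)) (rank_space p q m) (\<lambda>(z, X). X(0 := z))"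
  and measurable_rank_space_split:
    "(\<lambda>(z, X). X(0 := z)) \<in> pmf_unif q \<Otimes>\<^sub>M PiM {1..m} (\<lambda>_. pmf_unif p) \<rightarrow>\<^sub>M rank_space p q m"
proof -
  define M where "M = (\<lambda>j::nat. pmf_unif (if j = 0 then q else p))"
  have Q: "PiM {1..m} (\<lambda>_. pmf_unif p) = PiM {1..m} M"
    unfolding M_def by (intro PiM_cong) auto
  have P: "rank_space p q m = PiM (insert 0 {1..m}) M"
    unfolding rank_space_eq_PiM M_def by (intro PiM_cong) auto
  have "distr (M 0 \<Otimes>\<^sub>M PiM {1..m} M) (PiM (insert 0 {1..m}) M) (\<lambda>(z, X). X(0 := z)) = PiM (insert 0 {1..m}) M"
    by (rule distr_pair_PiM_eq_PiM) (simp_all add: M_def prob_space_pmf_unif)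
  then show "rank_space p q m = distr (pmf_unif q \<Otimes>\<^sub>M PiM {1..m} (\<lambda>_. pmf_unif p)) (rank_space p q m) (\<lambda>(z, X). X(0 := z))"
    unfolding P Q by (simp add: M_def)
  have "(\<lambda>y. (snd y) (0 := fst y)) \<in> M 0 \<Otimes>\<^sub>M PiM {1..m} M \<rightarrow>\<^sub>M PiM (insert 0 {1..m}) M"
    by (rule measurable_fun_upd[where J="{1..m}"]) auto
  then show "(\<lambda>(z, X). X(0 := z)) \<in> pmf_unif q \<Otimes>\<^sub>M PiM {1..m} (\<lambda>_. pmf_unif p) \<rightarrow>\<^sub>M rank_space p q m"
    unfolding P Q by (simp add: M_def case_prod_beta')
qed

definition rand_cdf :: "'a pmf \<Rightarrow> ('a \<times> 'a) set \<Rightarrow> 'a \<times> real \<Rightarrow> real" where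
  "rand_cdf p r z = measure (pmf_unif p) {y. lex_less r y z}"

lemma sets_lex_less:
  fixes r :: "('a::countable \<times> 'a) set"
  shows "{y. lex_less r y z} \<in> sets (pmf_unif p)"
proof -
  have "Measurable.pred (count_space UNIV \<Otimes>\<^sub>M borel) (\<lambda>y. lex_less r (id y) ((\<lambda>_. z) y))"
    by (intro pred_lex_less) (auto simp: space_pair_measure)
  then show ?thesis
    by (simp add: pred_def sets_pmf_unif space_pair_measure)
qed

lemma emeasure_rank_distr_singleton:
  fixes r :: "('a::countable \<times> 'a) set"
  assumes "irrefl r"
  shows "emeasure (distr (rank_space p q m) (count_space UNIV) (rank_stat r m)) {k} =
    (\<integral>\<^sup>+z. ennreal (Bernstein m k (rand_cdf p r z)) \<partial>pmf_unif q)"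
proof -
  let ?P = "rank_space p q m"
  let ?Q = "PiM {1..m} (\<lambda>_. pmf_unif p)"
  let ?upd = "(\<lambda>(z, X). X(0 := z)) :: ('a \<times> real) \<times> (nat \<Rightarrow> 'a \<times> real) \<Rightarrow> _"
  let ?R = "rank_stat r m -` {k} \<inter> space ?P"
  interpret Q: prob_space ?Q
    by (intro prob_space_PiM prob_space_pmf_unif)
  have R: "?R \<in> sets ?P"
    using measurable_rank_stat[OF assms] by (rule measurable_sets) simp
  have "emeasure (distr ?P (count_space UNIV) (rank_stat r m)) {k} = emeasure ?P ?R"
    using measurable_rank_stat[OF assms] by (rule emeasure_distr) simp
  also have "\<dots> = emeasure (distr (pmf_unif q \<Otimes>\<^sub>M ?Q) ?P ?upd) ?R"
    by (subst rank_space_split[symmetric]) (rule refl)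
  also have "\<dots> = emeasure (pmf_unif q \<Otimes>\<^sub>M ?Q) (?upd -` ?R \<inter> space (pmf_unif q \<Otimes>\<^sub>M ?Q))"
    using measurable_rank_space_split R by (rule emeasure_distr)
  also have "\<dots> = (\<integral>\<^sup>+z. emeasure ?Q (Pair z -` (?upd -` ?R \<inter> space (pmf_unif q \<Otimes>\<^sub>M ?Q))) \<partial>pmf_unif q)"
    using measurable_sets[OF measurable_rank_space_split R] by (rule Q.emeasure_pair_measure_alt)
  also have "\<dots> = (\<integral>\<^sup>+z. emeasure ?Q {X \<in> space ?Q. card {j\<in>{1..m}. X j \<in> {y. lex_less r y z}} = k} \<partial>pmf_unif q)"
  proof (intro nn_integral_cong arg_cong2[where f=emeasure] refl)
    fix z
    have "X(0 := z) \<in> space ?P" if "X \<in> space ?Q" for X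
      using that by (auto simp: rank_space_eq_PiM space_PiM PiE_iff extensional_def)
    moreover have "{j\<in>{1..m}. lex_less r ((X(0 := z)) j) ((X(0 := z)) 0)} = {j\<in>{1..m}. X j \<in> {y. lex_less r y z}}" for X
      by auto
    ultimately show "Pair z -` (?upd -` ?R \<inter> space (pmf_unif q \<Otimes>\<^sub>M ?Q)) =
        {X \<in> space ?Q. card {j\<in>{1..m}. X j \<in> {y. lex_less r y z}} = k}"
      by (auto simp: space_pair_measure rank_stat_eq_card[OF assms] simp del: fun_upd_apply)
  qed
  also have "\<dots> = (\<integral>\<^sup>+z. ennreal (Bernstein m k (rand_cdf p r z)) \<partial>pmf_unif q)"
    unfolding emeasure_PiM_card_eq_Bernstein[OF prob_space_pmf_unif sets_lex_less finite_atLeastAtMost]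
    by (simp add: rand_cdf_def)
  finally show ?thesis .
qed

section \<open>Intervals of the randomized distribution function\<close>

lemma strict_linear_order_on_UNIV_D:
  assumes "strict_linear_order_on UNIV r"
  shows "trans r" "irrefl r" "x \<noteq> y \<Longrightarrow> (x, y) \<in> r \<or> (y, x) \<in> r"
  using assms unfolding strict_linear_order_on_def total_on_def by auto

definition mass_below :: "'a pmf \<Rightarrow> ('a \<times> 'a) set \<Rightarrow> 'a \<Rightarrow> real" where
  "mass_below p r x = measure_pmf.prob p {y. (y, x) \<in> r}"

lemma rand_cdf_eq:
  fixes r :: "('a::countable \<times> 'a) set"
  assumes "irrefl r"
  shows "rand_cdf p r (x, u) = mass_below p r x + pmf p x * max 0 (min 1 u)"
proof -
  interpret prob_space "pmf_unif p" by (rule prob_space_pmf_unif)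
  have "{y. lex_less r y (x, u)} = {y. (y, x) \<in> r} \<times> UNIV \<union> {x} \<times> {..<u}"
    by (auto simp: lex_less_def)
  moreover have "{y. (y, x) \<in> r} \<times> UNIV \<inter> {x} \<times> {..<u} = {}"
    using assms by (auto simp: irrefl_def)
  moreover have "{y. (y, x) \<in> r} \<times> UNIV \<in> sets (pmf_unif p)" "{x} \<times> {..<u} \<in> sets (pmf_unif p)"
    unfolding sets_pmf_unif by (intro pair_measureI; simp)+
  ultimately have "rand_cdf p r (x, u) = prob ({y. (y, x) \<in> r} \<times> UNIV) + prob ({x} \<times> {..<u})"
    unfolding rand_cdf_def by (simp add: finite_measure_Union)
  then show ?thesis
    by (simp add: measure_pmf_unif_Times mass_below_def measure_uniform01_lessThan measure_pmf_single)
qed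

lemma measurable_rand_cdf:
  fixes r :: "('a::countable \<times> 'a) set"
  assumes "irrefl r"
  shows "rand_cdf p r \<in> borel_measurable (pmf_unif q)"
proof -
  have "(\<lambda>z. mass_below p r (fst z) + pmf p (fst z) * max 0 (min 1 (snd z))) \<in> borel_measurable (count_space UNIV \<Otimes>\<^sub>M borel)"
    by (rule measurable_pair_measure_countable1) auto
  moreover have "rand_cdf p r = (\<lambda>z. mass_below p r (fst z) + pmf p (fst z) * max 0 (min 1 (snd z)))"
    using rand_cdf_eq[OF assms] by (intro ext) (metis prod.collapse)
  ultimately show ?thesis
    by (simp add: measurable_cong_sets[OF sets_pmf_unif refl])
qed

lemma mass_below_add_pmf:
  assumes "irrefl r"
  shows "mass_below p r x + pmf p x = measure_pmf.prob p ({y. (y, x) \<in> r} \<union> {x})"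
proof -
  have "{y. (y, x) \<in> r} \<inter> {x} = {}"
    using assms by (auto simp: irrefl_def)
  then show ?thesis
    unfolding mass_below_def
    by (subst measure_pmf.finite_measure_Union) (auto simp: measure_pmf_single)
qed

lemma mass_below_add_pmf_le_1:
  assumes "irrefl r"
  shows "mass_below p r x + pmf p x \<le> 1"
  unfolding mass_below_add_pmf[OF assms] by simp

lemma mass_below_add_pmf_le:
  assumes "trans r" "irrefl r" "(y, x) \<in> r"
  shows "mass_below p r y + pmf p y \<le> mass_below p r x"
proof -
  have "measure_pmf.prob p ({t. (t, y) \<in> r} \<union> {y}) \<le> mass_below p r x"
    unfolding mass_below_def using assms
    by (intro measure_pmf.finite_measure_mono) (auto dest: transD)
  then show ?thesis
    by (simp only: mass_below_add_pmf[OF assms(2)])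
qed

definition cdf_interval :: "'a pmf \<Rightarrow> ('a \<times> 'a) set \<Rightarrow> 'a \<Rightarrow> real set" where
  "cdf_interval p r x = {mass_below p r x <..< mass_below p r x + pmf p x}"

lemma cdf_interval_subset:
  assumes "irrefl r"
  shows "cdf_interval p r x \<subseteq> {0<..<1}"
  using mass_below_add_pmf_le_1[OF assms, of p x]
  unfolding cdf_interval_def mass_below_def by (auto intro: le_less_trans[OF measure_nonneg])

lemma rand_cdf_notin_cdf_interval:
  fixes r :: "('a::countable \<times> 'a) set"
  assumes r: "strict_linear_order_on UNIV r" and "y \<noteq> x"
  shows "rand_cdf p r (y, u) \<notin> cdf_interval p r x"
proof -
  note r = strict_linear_order_on_UNIV_D[OF r]
  define t where "t = max 0 (min 1 u)"
  have F: "rand_cdf p r (y, u) = mass_below p r y + pmf p y * t"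
    unfolding t_def by (rule rand_cdf_eq[OF r(2)])
  have t: "0 \<le> pmf p y * t" "pmf p y * t \<le> pmf p y"
    unfolding t_def by (auto simp: mult_left_le)
  from r(3)[OF \<open>y \<noteq> x\<close>] show ?thesis
  proof
    assume "(y, x) \<in> r"
    then have "mass_below p r y + pmf p y \<le> mass_below p r x"
      by (rule mass_below_add_pmf_le[OF r(1,2)])
    then show ?thesis
      using F t unfolding cdf_interval_def by simp
  next
    assume "(x, y) \<in> r"
    then have "mass_below p r x + pmf p x \<le> mass_below p r y"
      by (rule mass_below_add_pmf_le[OF r(1,2)])
    then show ?thesis
      using F t unfolding cdf_interval_def by simp
  qed
qed

lemma disjoint_cdf_interval:
  assumes r: "strict_linear_order_on UNIV r" and "x \<noteq> y"
  shows "cdf_interval p r x \<inter> cdf_interval p r y = {}"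
proof -
  note r = strict_linear_order_on_UNIV_D[OF r]
  from r(3)[OF \<open>x \<noteq> y\<close>] show ?thesis
  proof
    assume "(x, y) \<in> r"
    then have "mass_below p r x + pmf p x \<le> mass_below p r y"
      by (rule mass_below_add_pmf_le[OF r(1,2)])
    then show ?thesis unfolding cdf_interval_def by auto
  next
    assume "(y, x) \<in> r"
    then have "mass_below p r y + pmf p y \<le> mass_below p r x"
      by (rule mass_below_add_pmf_le[OF r(1,2)])
    then show ?thesis unfolding cdf_interval_def by auto
  qed
qed

lemma null_sets_Diff_Union_cdf_interval:
  fixes r :: "('a::countable \<times> 'a) set"
  assumes r: "strict_linear_order_on UNIV r"
  shows "{0<..<1} - (\<Union>x. cdf_interval p r x) \<in> null_sets lborel"
proof -
  let ?U = "\<Union>x. cdf_interval p r x"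
  have U: "?U \<in> sets lborel"
    by (auto simp: cdf_interval_def)
  have "emeasure lborel ?U = (\<integral>\<^sup>+x. emeasure lborel (cdf_interval p r x) \<partial>count_space UNIV)"
    using disjoint_cdf_interval[OF r]
    by (intro emeasure_UN_countable) (auto simp: cdf_interval_def disjoint_family_on_def)
  also have "\<dots> = (\<integral>\<^sup>+x. ennreal (pmf p x) * 1 \<partial>count_space UNIV)"
    by (simp add: cdf_interval_def)
  also have "\<dots> = (\<integral>\<^sup>+x. 1 \<partial>measure_pmf p)"
    by (rule nn_integral_measure_pmf[symmetric])
  also have "\<dots> = 1"
    by simp
  finally have "emeasure lborel ?U = 1" .
  moreover have "?U \<subseteq> {0<..<1}"
    using cdf_interval_subset[OF strict_linear_order_on_UNIV_D(2)[OF r]] by blast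
  ultimately have "emeasure lborel ({0<..<1} - ?U) = 0"
    using U by (subst emeasure_Diff) auto
  then show ?thesis
    using U by (auto simp: null_sets_def)
qed

lemma nn_integral_affine_Ioo:
  fixes g :: "real \<Rightarrow> ennreal"
  assumes g[measurable]: "g \<in> borel_measurable borel" and c: "0 \<le> c"
  shows "ennreal c * (\<integral>\<^sup>+u. g (a + c * u) * indicator {0<..<1} u \<partial>lborel) =
    (\<integral>\<^sup>+w. g w * indicator {a<..<a + c} w \<partial>lborel)"
proof (cases "c = 0")
  case False
  with c have c: "0 < c" by simp
  have "a + c * u \<in> {a<..<a + c} \<longleftrightarrow> u \<in> {0<..<1}" for u
    using c by (simp add: zero_less_mult_iff)
  then have "(\<lambda>u. g (a + c * u) * indicator {a<..<a + c} (a + c * u)) = (\<lambda>u. g (a + c * u) * indicator {0<..<1} u)"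
    by (simp add: indicator_def)
  moreover have "(\<integral>\<^sup>+w. g w * indicator {a<..<a + c} w \<partial>lborel) =
      ennreal \<bar>c\<bar> * (\<integral>\<^sup>+u. g (a + c * u) * indicator {a<..<a + c} (a + c * u) \<partial>lborel)"
    using c by (intro nn_integral_real_affine) auto
  ultimately show ?thesis
    using c by simp
qed simp

lemma pmf_times_nn_integral_rand_cdf:
  fixes r :: "('a::countable \<times> 'a) set" and g :: "real \<Rightarrow> ennreal"
  assumes r: "irrefl r" and g[measurable]: "g \<in> borel_measurable borel"
  shows "ennreal (pmf p x) * (\<integral>\<^sup>+u. g (rand_cdf p r (x, u)) \<partial>uniform01) =
    (\<integral>\<^sup>+w. g w * indicator (cdf_interval p r x) w \<partial>lborel)"
proof -
  let ?F = "\<lambda>u. mass_below p r x + pmf p x * u"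
  have F: "rand_cdf p r (x, u) = ?F (max 0 (min 1 u))" for u
    by (rule rand_cdf_eq[OF r])
  have "(\<integral>\<^sup>+u. g (rand_cdf p r (x, u)) \<partial>uniform01) =
      (\<integral>\<^sup>+u. g (rand_cdf p r (x, u)) * indicator {0<..<1} u \<partial>lborel)"
    by (subst nn_integral_uniform_measure) (simp_all add: F divide_ennreal_def)
  also have "\<dots> = (\<integral>\<^sup>+u. g (?F u) * indicator {0<..<1} u \<partial>lborel)"
    by (intro nn_integral_cong) (simp add: F indicator_def)
  finally show ?thesis
    unfolding cdf_interval_def by (simp add: nn_integral_affine_Ioo)
qed

lemma nn_integral_rand_cdf:
  fixes r :: "('a::countable \<times> 'a) set" and g :: "real \<Rightarrow> ennreal"
  assumes r: "strict_linear_order_on UNIV r" and g[measurable]: "g \<in> borel_measurable borel"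
  shows "(\<integral>\<^sup>+z. g (rand_cdf p r z) \<partial>pmf_unif p) = (\<integral>\<^sup>+w. g w * indicator {0<..<1} w \<partial>lborel)"
proof -
  note r' = strict_linear_order_on_UNIV_D[OF r]
  interpret U: prob_space uniform01 by (rule prob_space_uniform01)
  have [measurable]: "rand_cdf p r \<in> borel_measurable (measure_pmf p \<Otimes>\<^sub>M uniform01)"
    using measurable_rand_cdf[OF r'(2), of p p] unfolding pmf_unif_def .
  have count: "(\<integral>\<^sup>+x. indicator (cdf_interval p r x) w \<partial>count_space UNIV) = indicator (\<Union>x. cdf_interval p r x) w" for w
  proof (cases "w \<in> (\<Union>x. cdf_interval p r x)")
    case True
    then obtain x where x: "w \<in> cdf_interval p r x" by auto
    have "w \<notin> cdf_interval p r y" if "y \<noteq> x" for y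
      using x disjoint_cdf_interval[OF r that, of p] by blast
    with x have "(\<lambda>y. indicator (cdf_interval p r y) w :: ennreal) = indicator {x}"
      by (auto simp: indicator_def fun_eq_iff)
    then show ?thesis using True by simp
  qed (auto simp: indicator_def)
  have "(\<integral>\<^sup>+z. g (rand_cdf p r z) \<partial>pmf_unif p) = (\<integral>\<^sup>+x. \<integral>\<^sup>+u. g (rand_cdf p r (x, u)) \<partial>uniform01 \<partial>measure_pmf p)"
    unfolding pmf_unif_def by (rule U.nn_integral_fst[symmetric]) measurable
  also have "\<dots> = (\<integral>\<^sup>+x. ennreal (pmf p x) * (\<integral>\<^sup>+u. g (rand_cdf p r (x, u)) \<partial>uniform01) \<partial>count_space UNIV)"
    by (rule nn_integral_measure_pmf)
  also have "\<dots> = (\<integral>\<^sup>+x. \<integral>\<^sup>+w. g w * indicator (cdf_interval p r x) w \<partial>lborel \<partial>count_space UNIV)"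
    by (simp add: pmf_times_nn_integral_rand_cdf[OF r'(2) g])
  also have "\<dots> = (\<integral>\<^sup>+w. \<integral>\<^sup>+x. g w * indicator (cdf_interval p r x) w \<partial>count_space UNIV \<partial>lborel)"
    by (rule nn_integral_count_space_nn_integral[symmetric]) (auto simp: cdf_interval_def)
  also have "\<dots> = (\<integral>\<^sup>+w. g w * indicator (\<Union>x. cdf_interval p r x) w \<partial>lborel)"
    by (simp add: nn_integral_cmult count)
  also have "\<dots> = (\<integral>\<^sup>+w. g w * indicator {0<..<1} w \<partial>lborel)"
  proof (intro nn_integral_cong_AE AE_I'[OF null_sets_Diff_Union_cdf_interval[OF r]])
    show "{w \<in> space lborel. g w * indicator (\<Union>x. cdf_interval p r x) w \<noteq> g w * indicator {0<..<1} w}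
        \<subseteq> {0<..<1} - (\<Union>x. cdf_interval p r x)"
      by (auto simp: indicator_def dest: subsetD[OF cdf_interval_subset[OF r'(2)]])
  qed
  finally show ?thesis .
qed

section \<open>Uniformity of the rank and its converse\<close>

lemma rank_distr_uniform:
  fixes r :: "('a::countable \<times> 'a) set"
  assumes r: "strict_linear_order_on UNIV r"
  shows "distr (rank_space p p m) (count_space UNIV) (rank_stat r m) = measure_pmf (pmf_of_set {0..m})"
proof (rule measure_eqI_countable[where A = UNIV])
  fix k
  show "emeasure (distr (rank_space p p m) (count_space UNIV) (rank_stat r m)) {k} =
      emeasure (measure_pmf (pmf_of_set {0..m})) {k}"
  proof (cases "k \<le> m")
    case True
    have B: "(\<lambda>w. ennreal (Bernstein m k w)) \<in> borel_measurable borel"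
      by measurable
    have "emeasure (distr (rank_space p p m) (count_space UNIV) (rank_stat r m)) {k} =
        (\<integral>\<^sup>+w. ennreal (Bernstein m k w) * indicator {0<..<1} w \<partial>lborel)"
      by (simp add: emeasure_rank_distr_singleton strict_linear_order_on_UNIV_D(2)[OF r] nn_integral_rand_cdf[OF r B])
    also have "\<dots> = ennreal (1 / (real m + 1))"
      by (rule nn_integral_has_integral_lebesgue'[OF _ has_integral_Bernstein[OF True]])
        (simp add: Bernstein_nonneg)
    finally show ?thesis
      using True by (simp add: emeasure_pmf_single)
  next
    case False
    then show ?thesis
      by (simp add: emeasure_rank_distr_singleton strict_linear_order_on_UNIV_D(2)[OF r]
          Bernstein_def binomial_eq_0 emeasure_pmf_single)
  qed
qed simp_all

lemma pmf_eq_if_le: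
  assumes le: "\<And>x. pmf p x \<le> pmf q x"
  shows "p = q"
proof (rule pmf_eqI)
  fix x
  have "measure_pmf.prob p (UNIV - {x}) \<le> measure_pmf.prob q (UNIV - {x})"
    unfolding measure_pmf_conv_infsetsum using le by (intro infsetsum_mono) auto
  then have "pmf q x \<le> pmf p x"
    using measure_pmf.prob_compl[of "{x}" p] measure_pmf.prob_compl[of "{x}" q]
    by (simp add: measure_pmf_single)
  with le show "pmf p x = pmf q x"
    by (simp add: order.antisym)
qed

lemma sum_Bernstein_rand_cdf_le:
  fixes r :: "('a::countable \<times> 'a) set" and p :: "'a pmf" and x :: 'a and m :: nat and d :: real
  assumes r: "strict_linear_order_on UNIV r" and m: "0 < m" and d: "0 < d"
  defines "K \<equiv> rank_window m (mass_below p r x + d) (mass_below p r x + pmf p x - d)"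
  shows "(\<Sum>k\<in>K. ennreal (Bernstein m k (rand_cdf p r z))) \<le> indicator ({x} \<times> UNIV) z + ennreal (1 / (4 * real m * d\<^sup>2))"
proof -
  obtain y u where z: "z = (y, u)" by (cases z)
  have w: "0 \<le> rand_cdf p r z" "rand_cdf p r z \<le> 1"
    unfolding rand_cdf_def by (simp_all add: prob_space.prob_le_1[OF prob_space_pmf_unif])
  have "(\<Sum>k\<in>K. ennreal (Bernstein m k (rand_cdf p r z))) = ennreal (\<Sum>k\<in>K. Bernstein m k (rand_cdf p r z))"
    using w by (intro sum_ennreal) (simp add: Bernstein_nonneg)
  also have "\<dots> \<le> indicator ({x} \<times> UNIV) z + ennreal (1 / (4 * real m * d\<^sup>2))"
  proof (cases "y = x")
    case True
    have "(\<Sum>k\<in>K. Bernstein m k (rand_cdf p r z)) \<le> 1"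
      using w by (intro sum_Bernstein_le_1) (auto simp: K_def rank_window_def)
    then show ?thesis
      using True z by (simp add: add_increasing2 ennreal_leI)
  next
    case False
    then have "rand_cdf p r z \<notin> cdf_interval p r x"
      unfolding z by (rule rand_cdf_notin_cdf_interval[OF r])
    then have "(\<Sum>k\<in>K. Bernstein m k (rand_cdf p r z)) \<le> 1 / (4 * real m * d\<^sup>2)"
      unfolding K_def cdf_interval_def using m d w
      by (intro sum_Bernstein_rank_window_le) auto
    then show ?thesis
      by (simp add: add_increasing ennreal_leI)
  qed
  finally show ?thesis .
qed

lemma pmf_bound_if_rank_distr_uniform:
  fixes r :: "('a::countable \<times> 'a) set"
  assumes r: "strict_linear_order_on UNIV r"
    and unif: "distr (rank_space p q m) (count_space UNIV) (rank_stat r m) = measure_pmf (pmf_of_set {0..m})"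
    and m: "0 < m" and d: "0 < d"
  shows "(real m * (pmf p x - 2 * d) - 1) / (real m + 1) \<le> pmf q x + 1 / (4 * real m * d\<^sup>2)"
proof -
  define K where "K = rank_window m (mass_below p r x + d) (mass_below p r x + pmf p x - d)"
  define \<epsilon> where "\<epsilon> = 1 / (4 * real m * d\<^sup>2)"
  have K: "finite K" "K \<subseteq> {0..m}"
    by (auto simp: K_def rank_window_def)
  interpret Q: prob_space "pmf_unif q" by (rule prob_space_pmf_unif)
  have [measurable]: "rand_cdf p r \<in> borel_measurable (pmf_unif q)"
    by (rule measurable_rand_cdf[OF strict_linear_order_on_UNIV_D(2)[OF r]])
  have x: "{x} \<times> UNIV \<in> sets (pmf_unif q)"
    unfolding sets_pmf_unif by (intro pair_measureI) auto
  have "real m * (pmf p x - 2 * d) - 1 \<le> real (card K)"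
    using card_rank_window_ge[of "mass_below p r x + d" "mass_below p r x + pmf p x - d" m]
      mass_below_add_pmf_le_1[OF strict_linear_order_on_UNIV_D(2)[OF r], of p x] d
    unfolding K_def mass_below_def by (simp add: algebra_simps)
  then have "(real m * (pmf p x - 2 * d) - 1) / (real m + 1) \<le> real (card K) / (real m + 1)"
    by (rule divide_right_mono) simp
  also have "\<dots> \<le> pmf q x + \<epsilon>"
  proof -
    have "ennreal (real (card K) / (real m + 1)) = emeasure (measure_pmf (pmf_of_set {0..m})) K"
      using K by (simp add: measure_pmf.emeasure_eq_measure measure_pmf_of_set Int_absorb1 add.commute)
    also have "\<dots> = (\<Sum>k\<in>K. emeasure (distr (rank_space p q m) (count_space UNIV) (rank_stat r m)) {k})"
      unfolding unif using K by (intro emeasure_eq_sum_singleton) auto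
    also have "\<dots> = (\<integral>\<^sup>+z. (\<Sum>k\<in>K. ennreal (Bernstein m k (rand_cdf p r z))) \<partial>pmf_unif q)"
      by (simp add: emeasure_rank_distr_singleton[OF strict_linear_order_on_UNIV_D(2)[OF r]] nn_integral_sum)
    also have "\<dots> \<le> (\<integral>\<^sup>+z. (indicator ({x} \<times> UNIV) z + ennreal \<epsilon>) \<partial>pmf_unif q)"
      unfolding K_def \<epsilon>_def by (intro nn_integral_mono sum_Bernstein_rand_cdf_le r m d)
    also have "\<dots> = ennreal (pmf q x + \<epsilon>)"
      using x by (simp add: nn_integral_add Q.emeasure_eq_measure measure_pmf_unif_Times measure_pmf_single
          \<epsilon>_def ennreal_plus Q.prob_space[unfolded space_pmf_unif])
    finally show ?thesis
      by (subst (asm) ennreal_le_iff) (simp_all add: \<epsilon>_def)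
  qed
  finally show ?thesis
    unfolding \<epsilon>_def .
qed

lemma pmf_le_if_rank_distr_uniform:
  fixes r :: "('a::countable \<times> 'a) set"
  assumes r: "strict_linear_order_on UNIV r"
    and unif: "\<And>m. m \<ge> 1 \<Longrightarrow> distr (rank_space p q m) (count_space UNIV) (rank_stat r m) = measure_pmf (pmf_of_set {0..m})"
  shows "pmf p x \<le> pmf q x"
proof (rule field_le_epsilon)
  fix e :: real assume "0 < e"
  define d where "d = e / 2"
  have d: "0 < d" using \<open>0 < e\<close> by (simp add: d_def)
  have "(\<lambda>m. (real m * (pmf p x - 2 * d) - 1) / (real m + 1)) \<longlonglongrightarrow> pmf p x - 2 * d"
    by real_asymp
  moreover have "(\<lambda>m. pmf q x + 1 / (4 * real m * d\<^sup>2)) \<longlonglongrightarrow> pmf q x"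
    using d by real_asymp
  moreover have "\<forall>m\<ge>1. (real m * (pmf p x - 2 * d) - 1) / (real m + 1) \<le> pmf q x + 1 / (4 * real m * d\<^sup>2)"
    using pmf_bound_if_rank_distr_uniform[OF r unif _ d] by simp
  ultimately have "pmf p x - 2 * d \<le> pmf q x"
    by (intro LIMSEQ_le) auto
  then show "pmf p x \<le> pmf q x + e"
    by (simp add: d_def)
qed

theorem theorem3p1:
  fixes r :: "('a::countable \<times> 'a) set" and p q :: "'a pmf"
  assumes "strict_linear_order_on UNIV r"
  shows "p = q \<longleftrightarrow>
    (\<forall>m::nat. m \<ge> 1 \<longrightarrow>
       distr (rank_space p q m) (count_space UNIV) (rank_stat r m)
         = measure_pmf (pmf_of_set {0..m}))"
proof
  assume "p = q"
  then show "\<forall>m::nat. m \<ge> 1 \<longrightarrow> distr (rank_space p q m) (count_space UNIV) (rank_stat r m) = measure_pmf (pmf_of_set {0..m})"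
    using rank_distr_uniform[OF assms] by simp
next
  assume "\<forall>m::nat. m \<ge> 1 \<longrightarrow> distr (rank_space p q m) (count_space UNIV) (rank_stat r m) = measure_pmf (pmf_of_set {0..m})"
  then show "p = q"
    by (intro pmf_eq_if_le pmf_le_if_rank_distr_uniform[OF assms]) auto
qed

end
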